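(* A dually chordal graph $G$ is $3$-colourable if and only if $G$ is perfect and $K_4$-free.
   Context: All graphs are finite, simple, undirected and connected. For a vertex $v$, $N[v]$ denotes its closed neighbourhood. A vertex $u\in N[v]$ is a maximum neighbour of $v$ if $N[w]\subseteq N[u]$ for all $w\in N[v]$ ($u=v$ allowed). A vertex ordering $(v_1,\dots,v_n)$ is a maximum neighbourhood ordering if every $v_i$ has a maximum neighbour in $G[\{v_i,\dots,v_n\}]$. A graph is dually chordal if it has a maximum neighbourhood ordering. A graph is perfect if every induced subgraph $H$ satisfies $\chi(H)=\omega(H)$ (chromatic number equals clique number). *)

theory Defs
  imports Main
begin

definition simple_graph :: "'a set \<Rightarrow> ('a \<Rightarrow> 'a \<Rightarrow> bool) \<Rightarrow> bool" where
  "simple_graph V E \<longleftrightarrow> finite V \<and> (\<forall>u v. E u v \<longrightarrow> u \<in> V \<and> v \<in> V)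
     \<and> (\<forall>u v. E u v \<longrightarrow> E v u) \<and> (\<forall>v. \<not> E v v)"

definition connected_graph :: "'a set \<Rightarrow> ('a \<Rightarrow> 'a \<Rightarrow> bool) \<Rightarrow> bool" where
  "connected_graph V E \<longleftrightarrow> V \<noteq> {} \<and>
     (\<forall>u\<in>V. \<forall>v\<in>V. (\<lambda>x y. E x y \<and> x \<in> V \<and> y \<in> V)\<^sup>*\<^sup>* u v)"

definition closed_nbhd :: "('a \<Rightarrow> 'a \<Rightarrow> bool) \<Rightarrow> 'a set \<Rightarrow> 'a \<Rightarrow> 'a set" where
  "closed_nbhd E S v = {u \<in> S. u = v \<or> E v u}"

definition max_neighbour :: "('a \<Rightarrow> 'a \<Rightarrow> bool) \<Rightarrow> 'a set \<Rightarrow> 'a \<Rightarrow> 'a \<Rightarrow> bool" where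
  "max_neighbour E S v u \<longleftrightarrow> u \<in> closed_nbhd E S v \<and>
     (\<forall>w \<in> closed_nbhd E S v. closed_nbhd E S w \<subseteq> closed_nbhd E S u)"

definition max_nbhd_ordering :: "'a set \<Rightarrow> ('a \<Rightarrow> 'a \<Rightarrow> bool) \<Rightarrow> 'a list \<Rightarrow> bool" where
  "max_nbhd_ordering V E vs \<longleftrightarrow> distinct vs \<and> set vs = V \<and>
     (\<forall>i < length vs. \<exists>u. max_neighbour E (set (drop i vs)) (vs ! i) u)"

definition dually_chordal :: "'a set \<Rightarrow> ('a \<Rightarrow> 'a \<Rightarrow> bool) \<Rightarrow> bool" where
  "dually_chordal V E \<longleftrightarrow> (\<exists>vs. max_nbhd_ordering V E vs)"

definition colourable :: "('a \<Rightarrow> 'a \<Rightarrow> bool) \<Rightarrow> 'a set \<Rightarrow> nat \<Rightarrow> bool" where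
  "colourable E S k \<longleftrightarrow> (\<exists>c :: 'a \<Rightarrow> nat. (\<forall>v\<in>S. c v < k) \<and>
     (\<forall>u\<in>S. \<forall>v\<in>S. E u v \<longrightarrow> c u \<noteq> c v))"

definition chromatic_number :: "('a \<Rightarrow> 'a \<Rightarrow> bool) \<Rightarrow> 'a set \<Rightarrow> nat" where
  "chromatic_number E S = (LEAST k. colourable E S k)"

definition is_clique :: "('a \<Rightarrow> 'a \<Rightarrow> bool) \<Rightarrow> 'a set \<Rightarrow> bool" where
  "is_clique E C \<longleftrightarrow> (\<forall>u\<in>C. \<forall>v\<in>C. u \<noteq> v \<longrightarrow> E u v)"

definition clique_number :: "('a \<Rightarrow> 'a \<Rightarrow> bool) \<Rightarrow> 'a set \<Rightarrow> nat" where
  "clique_number E S = Max {card C | C. C \<subseteq> S \<and> is_clique E C}"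

definition perfect :: "'a set \<Rightarrow> ('a \<Rightarrow> 'a \<Rightarrow> bool) \<Rightarrow> bool" where
  "perfect V E \<longleftrightarrow> (\<forall>S \<subseteq> V. chromatic_number E S = clique_number E S)"

definition K4_free :: "'a set \<Rightarrow> ('a \<Rightarrow> 'a \<Rightarrow> bool) \<Rightarrow> bool" where
  "K4_free V E \<longleftrightarrow> \<not> (\<exists>C \<subseteq> V. card C = 4 \<and> is_clique E C)"

end

theory Submission
  imports Defs
begin

text \<open>If G is perfect and K4-free then its chromatic number equals its clique number,
  which is at most 3. Conversely a 3-colourable graph is K4-free, and an induced subgraph
  with clique number 3 trivially has chromatic number 3. An induced subgraph with clique
  number at most 2 is triangle-free, so it is bipartite unless it has an odd closed walk,
  and a shortest one is an odd hole of G. In a dually chordal K4-free graph every hole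
  has a vertex adjacent to all of its vertices (by induction along a maximum neighbourhood
  ordering), and an odd hole with such a vertex is an odd wheel, which is not
  3-colourable.\<close>

lemma simple_graph_sym: "simple_graph V E \<Longrightarrow> E u v \<Longrightarrow> E v u"
  and simple_graph_irrefl: "simple_graph V E \<Longrightarrow> \<not> E v v"
  and simple_graph_in_vertices: "simple_graph V E \<Longrightarrow> E u v \<Longrightarrow> u \<in> V"
  and simple_graph_finite: "simple_graph V E \<Longrightarrow> finite V"
  unfolding simple_graph_def by blast+

section \<open>Cliques and colourings\<close>

lemma clique_card_le_colours:
  assumes "colourable E S k" "C \<subseteq> S" "is_clique E C"
  shows "card C \<le> k"
proof -
  obtain c :: "'a \<Rightarrow> nat" where c: "\<forall>v\<in>S. c v < k" "\<forall>u\<in>S. \<forall>v\<in>S. E u v \<longrightarrow> c u \<noteq> c v"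
    using assms(1) unfolding colourable_def by blast
  have "inj_on c C"
  proof (rule inj_onI)
    fix x y assume "x \<in> C" "y \<in> C" "c x = c y"
    then show "x = y" using c(2) assms(2,3) unfolding is_clique_def by blast
  qed
  moreover have "c ` C \<subseteq> {..<k}" using c(1) assms(2) by auto
  ultimately have "card C \<le> card {..<k}" by (intro card_inj_on_le) auto
  then show ?thesis by simp
qed

lemma colourable_mono: "colourable E S k \<Longrightarrow> k \<le> k' \<Longrightarrow> T \<subseteq> S \<Longrightarrow> colourable E T k'"
  unfolding colourable_def by (meson less_le_trans subsetD)

lemma colourable_card: "finite S \<Longrightarrow> (\<And>v. \<not> E v v) \<Longrightarrow> colourable E S (card S)"
proof -
  assume "finite S" and irr: "\<And>v. \<not> E v v"
  then obtain h where h: "bij_betw h S {0..<card S}" using ex_bij_betw_finite_nat by blast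
  then have "\<forall>v\<in>S. h v < card S" "\<forall>u\<in>S. \<forall>v\<in>S. E u v \<longrightarrow> h u \<noteq> h v"
    using irr unfolding bij_betw_def inj_on_def by auto
  then show ?thesis unfolding colourable_def by blast
qed

lemma colourable_chromatic_number:
  "finite S \<Longrightarrow> (\<And>v. \<not> E v v) \<Longrightarrow> colourable E S (chromatic_number E S)"
  unfolding chromatic_number_def using colourable_card by (rule LeastI)

lemma chromatic_number_le: "colourable E S k \<Longrightarrow> chromatic_number E S \<le> k"
  unfolding chromatic_number_def by (rule Least_le)

lemma finite_clique_cards: "finite S \<Longrightarrow> finite {card C | C. C \<subseteq> S \<and> is_clique E C}"
  by (rule finite_subset[where B = "card ` Pow S"]) auto

lemma clique_number_ge:
  "finite S \<Longrightarrow> C \<subseteq> S \<Longrightarrow> is_clique E C \<Longrightarrow> card C \<le> clique_number E S"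
  unfolding clique_number_def by (rule Max_ge) (auto simp: finite_clique_cards)

lemma clique_number_attained:
  assumes "finite S"
  obtains C where "C \<subseteq> S" "is_clique E C" "card C = clique_number E S"
proof -
  have "(0::nat) \<in> {card C | C. C \<subseteq> S \<and> is_clique E C}"
    unfolding mem_Collect_eq by (rule exI[of _ "{}"]) (simp add: is_clique_def)
  then have "clique_number E S \<in> {card C | C. C \<subseteq> S \<and> is_clique E C}"
    unfolding clique_number_def by (intro Max_in[OF finite_clique_cards[OF assms]]) auto
  then show ?thesis using that unfolding mem_Collect_eq by metis
qed

lemma clique_number_le_chromatic_number:
  assumes "finite S" "\<And>v. \<not> E v v"
  shows "clique_number E S \<le> chromatic_number E S"
proof -
  obtain C where C: "C \<subseteq> S" "is_clique E C" "card C = clique_number E S"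
    using clique_number_attained[OF assms(1)] .
  show ?thesis
    using clique_card_le_colours[OF colourable_chromatic_number[OF assms] C(1,2)] C(3) by simp
qed

lemma K4_free_clique_card_le:
  assumes "K4_free V E" "C \<subseteq> V" "is_clique E C"
  shows "card C \<le> 3"
proof (rule ccontr)
  assume "\<not> card C \<le> 3"
  then obtain T where "T \<subseteq> C" "card T = 4" using obtain_subset_with_card_n[of 4 C] by auto
  moreover have "is_clique E T" using assms(3) \<open>T \<subseteq> C\<close> unfolding is_clique_def by blast
  ultimately show False using assms(1,2) unfolding K4_free_def by blast
qed

lemma K4_free_if_colourable_3:
  assumes "colourable E V 3" shows "K4_free V E"
  unfolding K4_free_def
proof clarify
  fix C assume "C \<subseteq> V" "card C = 4" "is_clique E C"
  with clique_card_le_colours[OF assms this(1,3)] show False by simp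
qed

lemma K4_freeD:
  assumes "simple_graph V E" "K4_free V E" "{a, b, c, d} \<subseteq> V"
    "E a b" "E a c" "E a d" "E b c" "E b d" "E c d"
  shows False
proof -
  have "a \<noteq> b" "a \<noteq> c" "a \<noteq> d" "b \<noteq> c" "b \<noteq> d" "c \<noteq> d"
    using assms(4-) simple_graph_irrefl[OF assms(1)] by metis+
  then have "card {a, b, c, d} = 4" by simp
  moreover have "is_clique E {a, b, c, d}"
    unfolding is_clique_def using assms(4-) simple_graph_sym[OF assms(1)] by blast
  ultimately show False using assms(2,3) unfolding K4_free_def by blast
qed

lemma colourable_clique_number_if_colourable_2:
  assumes "colourable E S 2" "finite S" "\<And>u v. E u v \<Longrightarrow> E v u" "\<And>v. \<not> E v v"
  shows "colourable E S (clique_number E S)"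
proof (cases "\<exists>u\<in>S. \<exists>v\<in>S. E u v")
  case True
  then obtain u v where uv: "u \<in> S" "v \<in> S" "E u v" by blast
  then have "is_clique E {u, v}" using assms(3) unfolding is_clique_def by blast
  then have "card {u, v} \<le> clique_number E S"
    using uv(1,2) by (intro clique_number_ge[OF assms(2)]) auto
  moreover have "u \<noteq> v" using assms(4) uv(3) by metis
  ultimately have "2 \<le> clique_number E S" by simp
  then show ?thesis using colourable_mono[OF assms(1)] by simp
next
  case no_edge: False
  show ?thesis
  proof (cases "S = {}")
    case True then show ?thesis unfolding colourable_def by blast
  next
    case False
    then obtain v where "v \<in> S" by blast
    then have "1 \<le> clique_number E S"
      using clique_number_ge[OF assms(2), of "{v}" E] by (simp add: is_clique_def)
    then show ?thesis using no_edge unfolding colourable_def by (intro exI[of _ "\<lambda>_. 0"]) simp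
  qed
qed

section \<open>Closed walks and bipartiteness\<close>

definition walk :: "'a set \<Rightarrow> ('a \<Rightarrow> 'a \<Rightarrow> bool) \<Rightarrow> (nat \<Rightarrow> 'a) \<Rightarrow> nat \<Rightarrow> bool" where
  "walk S E f n \<longleftrightarrow> (\<forall>i\<le>n. f i \<in> S) \<and> (\<forall>i<n. E (f i) (f (Suc i)))"

lemma walk_snoc:
  assumes "walk S E f n" "E (f n) y" "y \<in> S"
  shows "walk S E (f(Suc n := y)) (Suc n)"
  using assms unfolding walk_def by (auto simp: less_Suc_eq le_Suc_eq)

lemma walk_join:
  assumes sym: "\<And>a b. E a b \<Longrightarrow> E b a"
    and f: "walk S E f n" and g: "walk S E g m" and meet: "f n = g m"
  shows "walk S E (\<lambda>t. if t \<le> n then f t else g (n + m - t)) (n + m)"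
  unfolding walk_def
proof (intro conjI allI impI)
  fix i assume "i \<le> n + m"
  then show "(if i \<le> n then f i else g (n + m - i)) \<in> S"
    using f g unfolding walk_def by auto
next
  fix i assume i: "i < n + m"
  show "E (if i \<le> n then f i else g (n + m - i)) (if Suc i \<le> n then f (Suc i) else g (n + m - Suc i))"
  proof (cases "Suc i \<le> n")
    case True then show ?thesis using f unfolding walk_def by auto
  next
    case False
    then have "n + m - Suc i < m" and eq: "Suc (n + m - Suc i) = n + m - i" using i by auto
    then have "E (g (n + m - Suc i)) (g (n + m - i))" using g eq unfolding walk_def by metis
    moreover have "g (n + m - i) = f i" if "i \<le> n" using False that meet by (simp add: not_less_eq_eq)
    ultimately show ?thesis using False sym by auto
  qed
qed

lemma walk_parity:
  assumes sym: "\<And>a b. E a b \<Longrightarrow> E b a"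
    and closed_even: "\<And>h l. walk S E h l \<Longrightarrow> h l = h 0 \<Longrightarrow> even l"
    and f: "walk S E f n" and g: "walk S E g m" and "f 0 = g 0" "f n = g m"
  shows "even n \<longleftrightarrow> even m"
  using closed_even[OF walk_join[OF sym f g \<open>f n = g m\<close>]] \<open>f 0 = g 0\<close> \<open>f n = g m\<close> by auto

text \<open>Colour a vertex by the parity of a walk to it from a chosen root of its component.\<close>
lemma colourable_2_if_closed_walks_even:
  assumes sym: "\<And>a b. E a b \<Longrightarrow> E b a"
    and closed_even: "\<And>h l. walk S E h l \<Longrightarrow> h l = h 0 \<Longrightarrow> even l"
  shows "colourable E S 2"
proof -
  define sources where "sources x = {r. \<exists>f n. walk S E f n \<and> f 0 = r \<and> f n = x}" for x
  define root where "root x = (SOME r. r \<in> sources x)" for x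
  define colour where
    "colour x = (if \<exists>f n. walk S E f n \<and> f 0 = root x \<and> f n = x \<and> even n then 0 else 1 :: nat)" for x
  have root: "root x \<in> sources x" if "x \<in> S" for x
  proof -
    have "walk S E (\<lambda>_. x) 0" using that unfolding walk_def by simp
    then have "x \<in> sources x" unfolding sources_def by blast
    then show ?thesis unfolding root_def by (rule someI)
  qed
  have sources_mono: "sources x \<subseteq> sources y" if "E x y" "y \<in> S" for x y
  proof
    fix r assume "r \<in> sources x"
    then obtain f n where "walk S E f n" "f 0 = r" "f n = x" unfolding sources_def by blast
    then show "r \<in> sources y"
      using walk_snoc[of S E f n y] that unfolding sources_def
      by (intro CollectI exI[of _ "f(Suc n := y)"] exI[of _ "Suc n"]) auto
  qed
  have "colour x \<noteq> colour y" if xy: "x \<in> S" "y \<in> S" "E x y" for x y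
  proof -
    have "sources x = sources y" using sources_mono xy sym by blast
    then have same_root: "root y = root x" unfolding root_def by simp
    obtain f n where f: "walk S E f n" "f 0 = root x" "f n = x"
      using root[OF xy(1)] unfolding sources_def by blast
    have f': "walk S E (f(Suc n := y)) (Suc n)" using walk_snoc[OF f(1)] f(3) xy by simp
    have even_to: "(\<exists>g m. walk S E g m \<and> g 0 = root x \<and> g m = z \<and> even m) \<longleftrightarrow> even l"
      if h: "walk S E h l" "h 0 = root x" "h l = z" for h l z
    proof
      assume "\<exists>g m. walk S E g m \<and> g 0 = root x \<and> g m = z \<and> even m"
      then obtain g m where "walk S E g m" "g 0 = root x" "g m = z" "even m" by blast
      then show "even l" using walk_parity[OF sym closed_even h(1)] h by simp
    next
      assume "even l"
      then show "\<exists>g m. walk S E g m \<and> g 0 = root x \<and> g m = z \<and> even m" using h by blast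
    qed
    have "colour x = (if even n then 0 else 1)"
      unfolding colour_def using even_to[OF f] by simp
    moreover have "colour y = (if even (Suc n) then 0 else 1)"
      unfolding colour_def same_root using even_to[OF f'] f(2) by simp
    ultimately show ?thesis by simp
  qed
  moreover have "\<forall>v\<in>S. colour v < 2" unfolding colour_def by auto
  ultimately show ?thesis unfolding colourable_def by blast
qed

section \<open>Holes\<close>

definition hole :: "'a set \<Rightarrow> ('a \<Rightarrow> 'a \<Rightarrow> bool) \<Rightarrow> (nat \<Rightarrow> 'a) \<Rightarrow> nat \<Rightarrow> bool" where
  "hole V E f k \<longleftrightarrow> 4 \<le> k \<and> (\<forall>i<k. f i \<in> V) \<and> inj_on f {..<k} \<and>
     (\<forall>a<k. \<forall>b<k. E (f a) (f b) \<longleftrightarrow> (b = Suc a mod k \<or> a = Suc b mod k))"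

definition triangle_free :: "('a \<Rightarrow> 'a \<Rightarrow> bool) \<Rightarrow> 'a set \<Rightarrow> bool" where
  "triangle_free E S \<longleftrightarrow> (\<forall>a\<in>S. \<forall>b\<in>S. \<forall>c\<in>S. \<not> (E a b \<and> E b c \<and> E a c))"

lemma hole_length: "hole V E f k \<Longrightarrow> 4 \<le> k"
  and hole_vertex: "hole V E f k \<Longrightarrow> i < k \<Longrightarrow> f i \<in> V"
  unfolding hole_def by auto

lemma hole_inj: "hole V E f k \<Longrightarrow> a < k \<Longrightarrow> b < k \<Longrightarrow> f a = f b \<Longrightarrow> a = b"
  unfolding hole_def by (metis inj_onD lessThan_iff)

lemma hole_adj:
  "hole V E f k \<Longrightarrow> a < k \<Longrightarrow> b < k \<Longrightarrow>
    E (f a) (f b) \<longleftrightarrow> (b = (if Suc a = k then 0 else Suc a) \<or> a = (if Suc b = k then 0 else Suc b))"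
  unfolding hole_def by (simp add: mod_Suc)

lemma hole_adj_lt:
  "hole V E f k \<Longrightarrow> Suc a < k \<Longrightarrow> Suc b < k \<Longrightarrow> E (f a) (f b) \<longleftrightarrow> (b = Suc a \<or> a = Suc b)"
  using hole_adj[of V E f k a b] by auto

lemma hole_rotate:
  assumes h: "hole V E f k" and p: "p < k"
  shows "hole V E (\<lambda>i. f ((i + p) mod k)) k"
proof -
  have k: "0 < k" using p by simp
  have shift_inj: "(a + p) mod k = (b + p) mod k \<longleftrightarrow> a = b" if "a < k" "b < k" for a b
    using that p by (auto simp: mod_if split: if_splits)
  have "Suc ((a + p) mod k) mod k = (Suc a mod k + p) mod k" for a
    by (simp add: mod_Suc_eq mod_add_left_eq)
  then have shift_Suc: "(b + p) mod k = Suc ((a + p) mod k) mod k \<longleftrightarrow> b = Suc a mod k"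
    if "a < k" "b < k" for a b
    using that k shift_inj by (metis mod_less_divisor)
  have adj: "\<forall>a<k. \<forall>b<k. E (f a) (f b) \<longleftrightarrow> (b = Suc a mod k \<or> a = Suc b mod k)"
    using h unfolding hole_def by blast
  show ?thesis
    unfolding hole_def
  proof (intro conjI allI impI)
    show "4 \<le> k" using hole_length[OF h] .
    show "f ((i + p) mod k) \<in> V" for i using hole_vertex[OF h] k by simp
    show "inj_on (\<lambda>i. f ((i + p) mod k)) {..<k}"
    proof (rule inj_onI)
      fix a b assume "a \<in> {..<k}" "b \<in> {..<k}" "f ((a + p) mod k) = f ((b + p) mod k)"
      then show "a = b" using hole_inj[OF h, of "(a + p) mod k" "(b + p) mod k"] shift_inj k by simp
    qed
    fix a b assume "a < k" "b < k"
    then show "E (f ((a + p) mod k)) (f ((b + p) mod k)) \<longleftrightarrow> (b = Suc a mod k \<or> a = Suc b mod k)"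
      using adj k shift_Suc by simp
  qed
qed

text \<open>A repeated vertex or a chord splits a closed walk into two shorter closed walks
  whose lengths add up to the original length (plus two for a chord), so one of them is odd.\<close>

lemma shortest_odd_closed_walk_inj:
  assumes g: "walk S E g l" "g l = g 0" "odd l"
    and shortest: "\<And>h m. walk S E h m \<Longrightarrow> h m = h 0 \<Longrightarrow> odd m \<Longrightarrow> l \<le> m"
    and ab: "a < b" "b < l"
  shows "g a \<noteq> g b"
proof
  assume e: "g a = g b"
  have gS: "\<And>i. i \<le> l \<Longrightarrow> g i \<in> S" and ge: "\<And>i. i < l \<Longrightarrow> E (g i) (g (Suc i))"
    using g(1) unfolding walk_def by auto
  define h1 where "h1 t = g (a + t)" for t
  define h2 where "h2 t = (if t \<le> a then g t else g (t + (b - a)))" for t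
  have "walk S E h1 (b - a)"
    unfolding walk_def h1_def using gS ge ab by auto
  moreover have "h1 (b - a) = h1 0" using ab e h1_def by simp
  moreover have "walk S E h2 (l - (b - a))"
    unfolding walk_def
  proof (intro conjI allI impI)
    show "h2 i \<in> S" if "i \<le> l - (b - a)" for i
      using that ab gS unfolding h2_def by auto
    show "E (h2 i) (h2 (Suc i))" if i: "i < l - (b - a)" for i
    proof (cases "i < a")
      case True then show ?thesis using ge[of i] ab h2_def by simp
    next
      case False
      then have "E (g (i + (b - a))) (g (Suc i + (b - a)))" using ge[of "i + (b - a)"] i ab by simp
      moreover have "g (i + (b - a)) = h2 i" using e ab False unfolding h2_def by (cases "i = a") auto
      ultimately show ?thesis using False unfolding h2_def by simp
    qed
  qed
  moreover have "h2 (l - (b - a)) = h2 0" using ab g(2) unfolding h2_def by simp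
  moreover have "odd (b - a) \<or> odd (l - (b - a))"
  proof -
    have "odd ((b - a) + (l - (b - a)))" using ab g(3) by simp
    then show ?thesis by (metis odd_add)
  qed
  moreover have "b - a < l" "l - (b - a) < l" using ab by auto
  ultimately show False using shortest by (meson not_le)
qed

lemma shortest_odd_closed_walk_chordless:
  assumes sym: "\<And>a b. E a b \<Longrightarrow> E b a"
    and g: "walk S E g l" "g l = g 0" "odd l"
    and shortest: "\<And>h m. walk S E h m \<Longrightarrow> h m = h 0 \<Longrightarrow> odd m \<Longrightarrow> l \<le> m"
    and ab: "a < b" "b < l" and chord: "E (g a) (g b)"
  shows "b = Suc a \<or> (a = 0 \<and> b = l - 1)"
proof (rule ccontr)
  assume long: "\<not> (b = Suc a \<or> (a = 0 \<and> b = l - 1))"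
  have gS: "\<And>i. i \<le> l \<Longrightarrow> g i \<in> S" and ge: "\<And>i. i < l \<Longrightarrow> E (g i) (g (Suc i))"
    using g(1) unfolding walk_def by auto
  define h1 where "h1 t = (if t \<le> b - a then g (a + t) else g a)" for t
  define h2 where "h2 t = (if t \<le> a then g t else g (t + (b - a - 1)))" for t
  have "walk S E h1 (b - a + 1)"
    unfolding walk_def
  proof (intro conjI allI impI)
    show "h1 i \<in> S" if "i \<le> b - a + 1" for i using that gS ab unfolding h1_def by auto
    show "E (h1 i) (h1 (Suc i))" if i: "i < b - a + 1" for i
    proof (cases "i < b - a")
      case True then show ?thesis using ge[of "a + i"] ab unfolding h1_def by auto
    next
      case False then have "i = b - a" using i by simp
      then show ?thesis using chord sym ab unfolding h1_def by auto
    qed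
  qed
  moreover have "h1 (b - a + 1) = h1 0" unfolding h1_def by simp
  moreover have "walk S E h2 (l - (b - a) + 1)"
    unfolding walk_def
  proof (intro conjI allI impI)
    show "h2 i \<in> S" if "i \<le> l - (b - a) + 1" for i using that gS ab unfolding h2_def by auto
    show "E (h2 i) (h2 (Suc i))" if i: "i < l - (b - a) + 1" for i
    proof (cases "i < a")
      case True then show ?thesis using ge[of i] ab unfolding h2_def by auto
    next
      case False
      show ?thesis
      proof (cases "i = a")
        case True then show ?thesis using chord ab unfolding h2_def by auto
      next
        case False': False
        then have "E (g (i + (b - a - 1))) (g (Suc i + (b - a - 1)))"
          using ge[of "i + (b - a - 1)"] i ab False by auto
        then show ?thesis using False False' unfolding h2_def by auto
      qed
    qed
  qed
  moreover have "h2 (l - (b - a) + 1) = h2 0" using ab g(2) unfolding h2_def by auto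
  moreover have "odd (b - a + 1) \<or> odd (l - (b - a) + 1)"
  proof -
    have "odd ((b - a + 1) + (l - (b - a) + 1))" using ab g(3) by simp
    then show ?thesis by (metis odd_add)
  qed
  moreover have "b - a + 1 < l" "l - (b - a) + 1 < l" using long ab by auto
  ultimately show False using shortest by (meson not_le)
qed

lemma shortest_odd_closed_walk_hole:
  assumes sym: "\<And>a b. E a b \<Longrightarrow> E b a" and irr: "\<And>a. \<not> E a a" and SV: "S \<subseteq> V"
    and g: "walk S E g l" "g l = g 0" "odd l"
    and shortest: "\<And>h m. walk S E h m \<Longrightarrow> h m = h 0 \<Longrightarrow> odd m \<Longrightarrow> l \<le> m"
    and l: "4 \<le> l"
  shows "hole V E g l"
proof -
  have gS: "\<And>i. i \<le> l \<Longrightarrow> g i \<in> S" and ge: "\<And>i. i < l \<Longrightarrow> E (g i) (g (Suc i))"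
    using g(1) unfolding walk_def by auto
  have chordless: "b = Suc a \<or> (a = 0 \<and> b = l - 1)" if "a < b" "b < l" "E (g a) (g b)" for a b
    using sym g shortest that by (rule shortest_odd_closed_walk_chordless)
  have distinct: "g a \<noteq> g b" if "a < b" "b < l" for a b
    using g shortest that by (rule shortest_odd_closed_walk_inj)
  have "E (g a) (g b) \<longleftrightarrow> (b = Suc a mod l \<or> a = Suc b mod l)" if ab: "a < l" "b < l" for a b
  proof
    assume e: "E (g a) (g b)"
    then have "a < b \<or> b < a" using irr by (metis nat_neq_iff)
    then show "b = Suc a mod l \<or> a = Suc b mod l"
    proof
      assume "a < b"
      then show ?thesis using chordless[OF \<open>a < b\<close> ab(2) e] ab by (auto simp: mod_Suc)
    next
      assume "b < a"
      then show ?thesis using chordless[OF \<open>b < a\<close> ab(1) sym[OF e]] ab by (auto simp: mod_Suc)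
    qed
  next
    assume "b = Suc a mod l \<or> a = Suc b mod l"
    moreover have "E (g i) (g (Suc i mod l))" if "i < l" for i
      using that ge[OF that] g(2) by (cases "Suc i = l") auto
    ultimately show "E (g a) (g b)" using ab sym by blast
  qed
  moreover have "inj_on g {..<l}"
  proof (rule inj_onI)
    fix a b assume "a \<in> {..<l}" "b \<in> {..<l}" "g a = g b"
    then show "a = b" using distinct[of a b] distinct[of b a] by (metis lessThan_iff nat_neq_iff)
  qed
  ultimately show ?thesis unfolding hole_def using l gS SV by auto
qed

lemma odd_hole_if_odd_closed_walk:
  assumes sym: "\<And>a b. E a b \<Longrightarrow> E b a" and irr: "\<And>a. \<not> E a a"
    and SV: "S \<subseteq> V" and tf: "triangle_free E S"
    and f: "walk S E f l" "f l = f 0" "odd l"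
  shows "\<exists>g k. hole V E g k \<and> odd k"
proof -
  define P where "P m \<longleftrightarrow> odd m \<and> (\<exists>h. walk S E h m \<and> h m = h 0)" for m
  define l0 where "l0 = (LEAST m. P m)"
  have "P l0" unfolding l0_def by (rule LeastI[of P l]) (use f P_def in blast)
  then obtain g where g: "walk S E g l0" "g l0 = g 0" "odd l0" unfolding P_def by blast
  have shortest: "\<And>h m. walk S E h m \<Longrightarrow> h m = h 0 \<Longrightarrow> odd m \<Longrightarrow> l0 \<le> m"
    unfolding l0_def P_def by (rule Least_le) blast
  have gS: "\<And>i. i \<le> l0 \<Longrightarrow> g i \<in> S" and ge: "\<And>i. i < l0 \<Longrightarrow> E (g i) (g (Suc i))"
    using g(1) unfolding walk_def by auto
  have "l0 \<noteq> 1" using ge[of 0] g(2) irr by (metis One_nat_def less_one)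
  moreover have "l0 \<noteq> 3"
  proof
    assume "l0 = 3"
    then have "E (g 0) (g 1)" "E (g 1) (g 2)" "E (g 0) (g 2)" "g 0 \<in> S" "g 1 \<in> S" "g 2 \<in> S"
      using ge[of 0] ge[of 1] ge[of 2] gS g(2) sym by (auto simp: numeral_eq_Suc)
    then show False using tf unfolding triangle_free_def by blast
  qed
  ultimately have "4 \<le> l0" using g(3) by presburger
  have "hole V E g l0"
    using sym irr SV g shortest \<open>4 \<le> l0\<close> by (rule shortest_odd_closed_walk_hole)
  then show ?thesis using g(3) by blast
qed

section \<open>Holes in dually chordal K4-free graphs\<close>

lemma max_neighbour_in: "max_neighbour E S z m \<Longrightarrow> m \<in> S \<and> (m = z \<or> E z m)"
  unfolding max_neighbour_def closed_nbhd_def by blast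

lemma max_neighbour_dominates:
  assumes "max_neighbour E S z m" "w \<in> S" "w = z \<or> E z w" "y \<in> S" "y = w \<or> E w y"
  shows "y = m \<or> E m y"
  using assms unfolding max_neighbour_def closed_nbhd_def by blast

lemma max_nbhd_ordering_first:
  assumes "max_nbhd_ordering V E vs" "A \<subseteq> V" "A \<noteq> {}"
  obtains p where "p < length vs" "vs ! p \<in> A" "A \<subseteq> set (drop p vs)"
proof -
  have set: "set vs = V" using assms(1) unfolding max_nbhd_ordering_def by blast
  define P where "P i \<longleftrightarrow> i < length vs \<and> vs ! i \<in> A" for i
  obtain a where "a \<in> A" using assms(3) by blast
  then obtain i where "P i" using assms(2) set unfolding P_def by (metis in_set_conv_nth subsetD)
  define p where "p = (LEAST i. P i)"
  have p: "P p" unfolding p_def using \<open>P i\<close> by (rule LeastI)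
  have "A \<subseteq> set (drop p vs)"
  proof
    fix w assume "w \<in> A"
    then obtain j where j: "j < length vs" "vs ! j = w" using assms(2) set by (metis in_set_conv_nth subsetD)
    then have "p \<le> j" unfolding p_def using \<open>w \<in> A\<close> P_def by (simp add: Least_le)
    then have "drop p vs ! (j - p) = w" "j - p < length (drop p vs)" using j by auto
    then show "w \<in> set (drop p vs)" by (metis nth_mem)
  qed
  then show ?thesis using that p unfolding P_def by blast
qed

text \<open>Each of the six vertices is equal or adjacent to two of u, q, d, so any two of them
  have a common closed neighbour in the triangle. Hence the maximum neighbour of the earliest
  of them in the ordering is equal or adjacent to all six, which either creates a K4 on the
  triangle or contradicts one of the non-edges.\<close>
lemma max_nbhd_ordering_K4_free_no_configuration:
  assumes sg: "simple_graph V E" and k4: "K4_free V E" and mno: "max_nbhd_ordering V E vs"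
    and V: "{r, u, q, d, x, y} \<subseteq> V"
    and E: "E r u" "E r q" "E u q" "E d u" "E d q" "E x q" "E x d" "E y u" "E y d"
    and non_E: "\<not> E d r" "\<not> E x u" "\<not> E y q"
    and ne: "d \<noteq> r" "x \<noteq> u" "y \<noteq> q"
  shows False
proof -
  have sym: "\<And>a b. E a b \<Longrightarrow> E b a" using simple_graph_sym[OF sg] .
  let ?A = "{r, u, q, d, x, y}"
  obtain p where p: "p < length vs" "vs ! p \<in> ?A" "?A \<subseteq> set (drop p vs)"
    using max_nbhd_ordering_first[OF mno V] by blast
  obtain m where m: "max_neighbour E (set (drop p vs)) (vs ! p) m"
    using mno p(1) unfolding max_nbhd_ordering_def by blast
  have sym_E: "E u r" "E q r" "E q u" "E u d" "E q d" "E q x" "E d x" "E u y" "E d y"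
    using E sym by auto
  have near: "\<exists>c\<in>{u, q, d}. (c = z \<or> E z c) \<and> (w = c \<or> E c w)"
    if "z \<in> ?A" "w \<in> ?A" for z w
    using that E sym_E by (elim insertE emptyE; simp; blast)
  have dominated: "w = m \<or> E m w" if w: "w \<in> ?A" for w
  proof -
    obtain c where c: "c \<in> {u, q, d}" "c = vs ! p \<or> E (vs ! p) c" "w = c \<or> E c w"
      using near[OF p(2) w] by blast
    have "c \<in> set (drop p vs)" "w \<in> set (drop p vs)" using c(1) w p(3) by auto
    then show ?thesis using max_neighbour_dominates[OF m _ c(2) _ c(3)] by blast
  qed
  have "m \<noteq> u" using dominated[of x] non_E(2) ne(2) sym by auto
  moreover have "m \<noteq> q" using dominated[of y] non_E(3) ne(3) sym by auto
  moreover have "m \<noteq> d" using dominated[of r] non_E(1) ne(1) by auto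
  ultimately have "E m u" "E m q" "E m d" using dominated[of u] dominated[of q] dominated[of d] by auto
  moreover have "m \<in> V"
    using max_neighbour_in[OF m] mno unfolding max_nbhd_ordering_def by (metis in_set_dropD)
  ultimately show False using K4_freeD[OF sg k4, of m u q d] V E sym_E by simp
qed

lemma max_neighbour_hole_apex:
  assumes h: "hole V E g k" and gS: "\<And>i. i < k \<Longrightarrow> g i \<in> S"
    and u: "max_neighbour E S (g 0) u"
  shows "\<forall>i<k. u \<noteq> g i" and "\<forall>i\<in>{0, 1, 2, k - 2, k - 1}. E u (g i)"
proof -
  have k: "4 \<le> k" using hole_length[OF h] .
  have adj: "E (g a) (g b) \<longleftrightarrow> (b = (if Suc a = k then 0 else Suc a) \<or> a = (if Suc b = k then 0 else Suc b))"
    if "a < k" "b < k" for a b using hole_adj[OF h that] .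
  have S: "g 0 \<in> S" "g 1 \<in> S" "g 2 \<in> S" "g (k - 2) \<in> S" "g (k - 1) \<in> S"
    using gS k by auto
  have "E (g 0) (g 1)" "E (g 0) (g (k - 1))" "E (g 1) (g 2)" "E (g (k - 1)) (g (k - 2))"
    using adj[of 0 1] adj[of 0 "k - 1"] adj[of 1 2] adj[of "k - 1" "k - 2"] k by auto
  then have "g 0 = u \<or> E u (g 0)" "g 1 = u \<or> E u (g 1)" "g (k - 1) = u \<or> E u (g (k - 1))"
      "g 2 = u \<or> E u (g 2)" "g (k - 2) = u \<or> E u (g (k - 2))"
    using max_neighbour_dominates[OF u S(1) _ S(1)] max_neighbour_dominates[OF u S(1) _ S(2)]
      max_neighbour_dominates[OF u S(1) _ S(5)] max_neighbour_dominates[OF u S(2) _ S(3)]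
      max_neighbour_dominates[OF u S(5) _ S(4)]
    by auto
  then have near: "g i = u \<or> E u (g i)" if "i \<in> {0, 1, 2, k - 2, k - 1}" for i
    using that by auto
  show off: "\<forall>i<k. u \<noteq> g i"
  proof (intro allI impI notI)
    fix i assume i: "i < k" and ui: "u = g i"
    have "u = g 0 \<or> E (g 0) u" using max_neighbour_in[OF u] by blast
    then have "i = 0 \<or> i = 1 \<or> i = k - 1"
      using ui i hole_inj[OF h i, of 0] adj[of 0 i] k by (auto split: if_splits)
    moreover have "i \<noteq> 0"
    proof
      assume "i = 0"
      then have "g 2 = g 0 \<or> E (g 0) (g 2)" using near[of 2] ui by simp
      then show False using adj[of 0 2] hole_inj[OF h, of 2 0] k by auto
    qed
    moreover have "i \<noteq> 1"
    proof
      assume "i = 1"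
      then have "g (k - 1) = g 1 \<or> E (g 1) (g (k - 1))" using near[of "k - 1"] ui by simp
      then show False using adj[of 1 "k - 1"] hole_inj[OF h, of "k - 1" 1] k by auto
    qed
    moreover have "i \<noteq> k - 1"
    proof
      assume "i = k - 1"
      then have "g 1 = g (k - 1) \<or> E (g (k - 1)) (g 1)" using near[of 1] ui by simp
      then show False using adj[of "k - 1" 1] hole_inj[OF h, of 1 "k - 1"] k by auto
    qed
    ultimately show False by blast
  qed
  show "\<forall>i\<in>{0, 1, 2, k - 2, k - 1}. E u (g i)"
  proof
    fix i assume i: "i \<in> {0, 1, 2, k - 2, k - 1}"
    then have "i < k" using k by auto
    then show "E u (g i)" using near[OF i] off by metis
  qed
qed

lemma gap_in_predicate:
  fixes P :: "nat \<Rightarrow> bool"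
  assumes "P 0" "P 1" "P 2" "P (k - 2)" "P (k - 1)" "j < k" "\<not> P j"
  obtains s t where "2 \<le> s" "s + 2 \<le> t" "Suc t < k" "P (s - 1)" "P s" "\<not> P (Suc s)" "P t"
    "\<And>c. s < c \<Longrightarrow> c < t \<Longrightarrow> \<not> P c"
proof -
  define j0 where "j0 = (LEAST i. i < k \<and> \<not> P i)"
  have j0: "j0 < k" "\<not> P j0" unfolding j0_def using assms(6,7) by (metis (mono_tags, lifting) LeastI)+
  have below: "P i" if "i < j0" for i
    using that j0(1) not_less_Least[of i "\<lambda>i. i < k \<and> \<not> P i"] unfolding j0_def by auto
  have "j0 \<noteq> 0" "j0 \<noteq> 1" "j0 \<noteq> 2" "j0 \<noteq> k - 1" "j0 \<noteq> k - 2"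
    using j0(2) assms(1-5) by metis+
  then have j0_range: "3 \<le> j0" "j0 + 3 \<le> k" using j0(1) by auto
  define t where "t = (LEAST i. j0 < i \<and> i < k \<and> P i)"
  have ex: "j0 < k - 2 \<and> k - 2 < k \<and> P (k - 2)" using j0_range assms(4) by auto
  have "j0 < t \<and> t < k \<and> P t" unfolding t_def using ex by (rule LeastI)
  then have t: "j0 < t" "t < k" "P t" by auto
  have "t \<le> k - 2" unfolding t_def using ex by (rule Least_le)
  moreover have gap: "\<not> P c" if "j0 < c" "c < t" for c
    using that t(2) not_less_Least[of c "\<lambda>i. j0 < i \<and> i < k \<and> P i"] unfolding t_def by auto
  ultimately show ?thesis
  proof (intro that[of "j0 - 1" t])
    fix c assume "j0 - 1 < c" "c < t"
    then show "\<not> P c" using gap[of c] j0(2) by (cases "c = j0") auto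
  qed (use j0 j0_range t below in auto)
qed

lemma hole_through_apex:
  assumes sym: "\<And>a b. E a b \<Longrightarrow> E b a" and irr: "\<And>a. \<not> E a a"
    and h: "hole V E g k" and u: "u \<in> V" "\<forall>i<k. u \<noteq> g i"
    and st: "s + 2 \<le> t" "Suc t < k"
    and u_adj: "\<And>c. s \<le> c \<Longrightarrow> c \<le> t \<Longrightarrow> E u (g c) \<longleftrightarrow> (c = s \<or> c = t)"
  shows "hole V E (\<lambda>i. if i = 0 then u else g (s + i - 1)) (t - s + 2)"
    (is "hole V E ?h ?L")
proof -
  have range: "s \<le> s + i - 1 \<and> s + i - 1 \<le> t" if "i < ?L" "i \<noteq> 0" for i
    using that st by auto
  have off: "g (s + i - 1) \<noteq> u" if "i < ?L" "i \<noteq> 0" for i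
  proof -
    have "s + i - 1 < k" using range[OF that] st by simp
    then show ?thesis using u(2) by metis
  qed
  have "inj_on ?h {..<?L}"
  proof (rule inj_onI)
    fix a b assume a: "a \<in> {..<?L}" and b: "b \<in> {..<?L}" and eq: "?h a = ?h b"
    show "a = b"
    proof (cases "a = 0"; cases "b = 0")
      assume "a \<noteq> 0" "b \<noteq> 0"
      then have "s + a - 1 = s + b - 1"
        using eq hole_inj[OF h] range[of a] range[of b] a b st by auto
      then show ?thesis using \<open>a \<noteq> 0\<close> \<open>b \<noteq> 0\<close> by auto
    qed (use eq off a b in \<open>auto split: if_splits\<close>)
  qed
  moreover have "E (?h a) (?h b) \<longleftrightarrow> (b = Suc a mod ?L \<or> a = Suc b mod ?L)"
    if a: "a < ?L" and b: "b < ?L" for a b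
  proof -
    have mod: "Suc a mod ?L = (if Suc a = ?L then 0 else Suc a)"
      "Suc b mod ?L = (if Suc b = ?L then 0 else Suc b)" using a b by auto
    show ?thesis
    proof (cases "a = 0"; cases "b = 0")
      assume "a = 0" "b = 0" then show ?thesis using irr st by simp
    next
      assume "a = 0" "b \<noteq> 0"
      then show ?thesis using u_adj[of "s + b - 1"] range[OF b] b mod st by auto
    next
      assume "a \<noteq> 0" "b = 0"
      then show ?thesis using u_adj[of "s + a - 1"] range[OF a] a mod st sym by auto
    next
      assume "a \<noteq> 0" "b \<noteq> 0"
      then have "Suc (s + a - 1) < k" "Suc (s + b - 1) < k" using range[OF a] range[OF b] st by auto
      then show ?thesis
        using hole_adj_lt[OF h] \<open>a \<noteq> 0\<close> \<open>b \<noteq> 0\<close> a b mod by auto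
    qed
  qed
  moreover have "?h i \<in> V" if "i < ?L" for i
    using u(1) hole_vertex[OF h] range[OF that] st by auto
  ultimately show ?thesis unfolding hole_def using st by auto
qed

lemma apex_segment_dominated_impossible:
  assumes sg: "simple_graph V E" and k4: "K4_free V E" and mno: "max_nbhd_ordering V E vs"
    and h: "hole V E g k" and u: "u \<in> V" "\<forall>i<k. u \<noteq> g i"
    and st: "2 \<le> s" "s + 2 \<le> t" "Suc t < k"
    and u_adj: "E u (g (s - 1))" "E u (g s)" "\<not> E u (g (Suc s))" "E u (g t)"
    and d_adj: "E d u" "E d (g s)" "E d (g (Suc s))" "E d (g t)"
  shows False
proof -
  have sym: "\<And>a b. E a b \<Longrightarrow> E b a" using simple_graph_sym[OF sg] .
  have V: "{g (s - 1), u, g s, d, g (Suc s), g t} \<subseteq> V"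
    using hole_vertex[OF h] u(1) simple_graph_in_vertices[OF sg d_adj(1)] st by auto
  have rim: "E (g (s - 1)) (g s)" "E (g (Suc s)) (g s)" "\<not> E (g t) (g s)"
    "\<not> E (g (s - 1)) (g (Suc s))"
    using hole_adj_lt[OF h, of "s - 1" s] hole_adj_lt[OF h, of "Suc s" s]
      hole_adj_lt[OF h, of t s] hole_adj_lt[OF h, of "s - 1" "Suc s"] st by auto
  have "\<not> E d (g (s - 1))"
  proof
    assume "E d (g (s - 1))"
    then show False
      using K4_freeD[OF sg k4, of d u "g (s - 1)" "g s"] V d_adj u_adj rim sym by auto
  qed
  moreover have "d \<noteq> g (s - 1)" using d_adj(3) rim(4) by auto
  moreover have "g (Suc s) \<noteq> u" using u(2)[rule_format, of "Suc s"] st by auto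
  moreover have "g t \<noteq> g s" using hole_inj[OF h, of t s] st by auto
  ultimately show False
    using max_nbhd_ordering_K4_free_no_configuration[OF sg k4 mno V] u_adj d_adj rim sym by blast
qed

text \<open>Let the earliest vertex of the hole be g 0 and u its maximum neighbour among the
  remaining vertices. If u missed part of the hole, u and a segment of the hole would form
  a hole lying entirely after g 0, whose dominating vertex produces a forbidden configuration.\<close>
lemma hole_dominated_step:
  assumes sg: "simple_graph V E" and k4: "K4_free V E" and mno: "max_nbhd_ordering V E vs"
    and h: "hole V E g k" and suffix: "\<And>i. i < k \<Longrightarrow> g i \<in> set (drop j vs)"
    and j: "j < length vs" "g 0 = vs ! j"
    and IH: "\<And>h L. hole V E h L \<Longrightarrow> h ` {..<L} \<subseteq> set (drop (Suc j) vs) \<Longrightarrow> \<exists>d. \<forall>i<L. E d (h i)"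
  shows "\<exists>d. \<forall>i<k. E d (g i)"
proof -
  have sym: "\<And>a b. E a b \<Longrightarrow> E b a" using simple_graph_sym[OF sg] .
  have irr: "\<And>a. \<not> E a a" using simple_graph_irrefl[OF sg] .
  have k: "4 \<le> k" using hole_length[OF h] .
  have drop_j: "set (drop j vs) = insert (g 0) (set (drop (Suc j) vs))"
    using j by (metis Cons_nth_drop_Suc list.simps(15))
  obtain u where u: "max_neighbour E (set (drop j vs)) (g 0) u"
    using mno j unfolding max_nbhd_ordering_def by metis
  have u_drop: "u \<in> set (drop j vs)" using max_neighbour_in[OF u] by blast
  have uV: "u \<in> V" using u_drop mno unfolding max_nbhd_ordering_def by (metis in_set_dropD)
  have off: "\<forall>i<k. u \<noteq> g i" and near: "\<forall>i\<in>{0, 1, 2, k - 2, k - 1}. E u (g i)"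
    using max_neighbour_hole_apex[OF h suffix u] by blast+
  have "\<forall>i<k. E u (g i)"
  proof (rule ccontr)
    assume "\<not> (\<forall>i<k. E u (g i))"
    then obtain i where "i < k" "\<not> E u (g i)" by blast
    then obtain s t where st: "2 \<le> s" "s + 2 \<le> t" "Suc t < k"
      and u_adj: "E u (g (s - 1))" "E u (g s)" "\<not> E u (g (Suc s))" "E u (g t)"
      and gap: "\<And>c. s < c \<Longrightarrow> c < t \<Longrightarrow> \<not> E u (g c)"
      using gap_in_predicate[of "\<lambda>i. E u (g i)"] near by (metis insertCI)
    let ?h = "\<lambda>i. if i = 0 then u else g (s + i - 1)"
    let ?L = "t - s + 2"
    have "E u (g c) \<longleftrightarrow> (c = s \<or> c = t)" if "s \<le> c" "c \<le> t" for c
      using that u_adj gap[of c] by (cases "c = s \<or> c = t") auto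
    then have hole: "hole V E ?h ?L"
      using hole_through_apex[OF sym irr h uV off st(2,3)] by blast
    have "?h ` {..<?L} \<subseteq> set (drop (Suc j) vs)"
    proof
      fix w assume "w \<in> ?h ` {..<?L}"
      then obtain i where i: "i < ?L" "w = ?h i" by blast
      show "w \<in> set (drop (Suc j) vs)"
      proof (cases "i = 0")
        case True
        then show ?thesis using i u_drop drop_j off k by auto
      next
        case False
        then have "s + i - 1 < k" "s + i - 1 \<noteq> 0" using i st by auto
        then show ?thesis using False i suffix drop_j hole_inj[OF h, of "s + i - 1" 0] k by auto
      qed
    qed
    then obtain d where d: "\<forall>i<?L. E d (?h i)" using IH[OF hole] by blast
    have "E d u" "E d (g s)" "E d (g (Suc s))" "E d (g t)"
      using d[rule_format, of 0] d[rule_format, of 1] d[rule_format, of 2] d[rule_format, of "?L - 1"] st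
      by (auto simp: numeral_2_eq_2)
    then show False
      using apex_segment_dominated_impossible[OF sg k4 mno h uV off st u_adj] by blast
  qed
  then show ?thesis by blast
qed

lemma all_less_unrotate:
  fixes p k :: nat
  assumes "p < k" "\<forall>i<k. Q ((i + p) mod k)"
  shows "\<forall>i<k. Q i"
proof (intro allI impI)
  fix i assume "i < k"
  define i' where "i' = (if p \<le> i then i - p else i + k - p)"
  have "i' < k" "(i' + p) mod k = i" using \<open>i < k\<close> assms(1) unfolding i'_def by (auto simp: mod_if)
  then show "Q i" using assms(2) by metis
qed

lemma hole_dominated:
  assumes sg: "simple_graph V E" and k4: "K4_free V E" and mno: "max_nbhd_ordering V E vs"
    and h: "hole V E f k"
  shows "\<exists>d. \<forall>i<k. E d (f i)"
proof -
  define P where "P j \<longleftrightarrow> (\<forall>f k. hole V E f k \<longrightarrow> f ` {..<k} \<subseteq> set (drop j vs) \<longrightarrow>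
    (\<exists>d. \<forall>i<k. E d (f i)))" for j
  have "P 0"
  proof (rule inc_induct[of 0 "length vs" P])
    show "P (length vs)" unfolding P_def
    proof (intro allI impI)
      fix f k assume "hole V E f k" "f ` {..<k} \<subseteq> set (drop (length vs) vs)"
      then have "f 0 \<in> set (drop (length vs) vs)" using hole_length by fastforce
      then show "\<exists>d. \<forall>i<k. E d (f i)" by simp
    qed
  next
    fix j assume step: "0 \<le> j" "j < length vs" "P (Suc j)"
    show "P j" unfolding P_def
    proof (intro allI impI)
      fix f k assume h: "hole V E f k" and sub: "f ` {..<k} \<subseteq> set (drop j vs)"
      have drop_j: "set (drop j vs) = insert (vs ! j) (set (drop (Suc j) vs))"
        using step(2) by (metis Cons_nth_drop_Suc list.simps(15))
      have IH: "\<And>h L. hole V E h L \<Longrightarrow> h ` {..<L} \<subseteq> set (drop (Suc j) vs) \<Longrightarrow> \<exists>d. \<forall>i<L. E d (h i)"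
        using step(3) unfolding P_def by blast
      show "\<exists>d. \<forall>i<k. E d (f i)"
      proof (cases "\<exists>p<k. f p = vs ! j")
        case False
        then show ?thesis using IH[OF h] sub drop_j by blast
      next
        case True
        then obtain p where p: "p < k" "f p = vs ! j" by blast
        let ?g = "\<lambda>i. f ((i + p) mod k)"
        have "?g i \<in> set (drop j vs)" if "i < k" for i
          using sub p(1) by auto
        moreover have "?g 0 = vs ! j" using p by simp
        ultimately obtain d where "\<forall>i<k. E d (?g i)"
          using hole_dominated_step[OF sg k4 mno hole_rotate[OF h p(1)] _ step(2) _ IH] by blast
        then have "\<forall>i<k. E d (f i)" by (rule all_less_unrotate[OF p(1), of "\<lambda>i. E d (f i)"])
        then show ?thesis by blast
      qed
    qed
  qed simp
  moreover have "f ` {..<k} \<subseteq> set (drop 0 vs)"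
    using hole_vertex[OF h] mno unfolding max_nbhd_ordering_def by auto
  ultimately show ?thesis using h unfolding P_def by blast
qed

section \<open>Odd wheels and the characterisation\<close>

lemma eq_if_avoid_two_of_three:
  "(a::nat) < 3 \<Longrightarrow> b < 3 \<Longrightarrow> x < 3 \<Longrightarrow> y < 3 \<Longrightarrow> x \<noteq> y \<Longrightarrow>
    a \<noteq> x \<Longrightarrow> a \<noteq> y \<Longrightarrow> b \<noteq> x \<Longrightarrow> b \<noteq> y \<Longrightarrow> a = b"
  by (auto simp: less_Suc_eq numeral_3_eq_3)

text \<open>The rim of an odd wheel alternates between the two colours not used on the hub,
  which is impossible around an odd cycle.\<close>
lemma odd_wheel_not_colourable_3:
  assumes sg: "simple_graph V E" and col: "colourable E V 3"
    and h: "hole V E f k" and odd: "odd k" and hub: "\<forall>i<k. E d (f i)"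
  shows False
proof -
  obtain c :: "'a \<Rightarrow> nat" where c: "\<forall>v\<in>V. c v < 3" "\<forall>u\<in>V. \<forall>v\<in>V. E u v \<longrightarrow> c u \<noteq> c v"
    using col unfolding colourable_def by blast
  have k: "4 \<le> k" using hole_length[OF h] .
  have fV: "\<And>i. i < k \<Longrightarrow> f i \<in> V" using hole_vertex[OF h] .
  have dV: "d \<in> V" using simple_graph_in_vertices[OF sg] hub[rule_format, of 0] k by simp
  have hub_colour: "c (f i) \<noteq> c d" "c (f i) < 3" if "i < k" for i
    using c(1) c(2)[rule_format, OF dV fV[OF that] hub[rule_format, OF that]] fV[OF that] by auto
  have rim_colour: "c (f i) \<noteq> c (f (Suc i))" if "Suc i < k" for i
    using c(2) fV that hole_adj[OF h, of i "Suc i"] by simp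
  have d_colour: "c d < 3" using c(1) dV by blast
  have alternate: "c (f i) = (if even i then c (f 0) else c (f 1))" if "i < k" for i
    using that
  proof (induction i)
    case (Suc i)
    have IH: "c (f i) = (if even i then c (f 0) else c (f 1))" using Suc by simp
    have facts: "c (f (Suc i)) \<noteq> c d" "c (f 0) \<noteq> c d" "c (f 1) \<noteq> c d"
      "c (f (Suc i)) < 3" "c (f 0) < 3" "c (f 1) < 3"
      "c (f i) \<noteq> c (f (Suc i))" "c (f 0) \<noteq> c (f 1)"
      using hub_colour[of "Suc i"] hub_colour[of 0] hub_colour[of 1]
        rim_colour[of i] rim_colour[of 0] Suc.prems k by auto
    show ?case
    proof (cases "even i")
      case True
      have "c (f (Suc i)) = c (f 1)"
        by (rule eq_if_avoid_two_of_three[of _ _ "c d" "c (f 0)"]) (use facts IH d_colour True in auto)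
      then show ?thesis using True by simp
    next
      case False
      have "c (f (Suc i)) = c (f 0)"
        by (rule eq_if_avoid_two_of_three[of _ _ "c d" "c (f 1)"]) (use facts IH d_colour False in auto)
      then show ?thesis using False by simp
    qed
  qed simp
  have "c (f (k - 1)) = c (f 0)" using alternate[of "k - 1"] odd k by simp
  moreover have "E (f (k - 1)) (f 0)" using hole_adj[OF h, of "k - 1" 0] k by auto
  moreover have "f (k - 1) \<in> V" "f 0 \<in> V" using fV k by auto
  ultimately show False using c(2) by blast
qed

lemma triangle_free_if_clique_number_less_3:
  assumes "finite S" "\<And>a. \<not> E a a" "\<And>a b. E a b \<Longrightarrow> E b a" "clique_number E S < 3"
  shows "triangle_free E S"
  unfolding triangle_free_def
proof (intro ballI notI)
  fix a b c assume abc: "a \<in> S" "b \<in> S" "c \<in> S" "E a b \<and> E b c \<and> E a c"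
  then have "a \<noteq> b" "b \<noteq> c" "a \<noteq> c" using assms(2) by metis+
  then have "card {a, b, c} = 3" by simp
  moreover have "is_clique E {a, b, c}" using abc assms(3) unfolding is_clique_def by blast
  ultimately have "3 \<le> clique_number E S"
    using clique_number_ge[OF assms(1), of "{a, b, c}" E] abc(1-3) by simp
  then show False using assms(4) by simp
qed

lemma colourable_2_if_triangle_free:
  assumes sg: "simple_graph V E" and mno: "max_nbhd_ordering V E vs" and col: "colourable E V 3"
    and S: "S \<subseteq> V" "triangle_free E S"
  shows "colourable E S 2"
proof (rule colourable_2_if_closed_walks_even)
  show sym: "\<And>a b. E a b \<Longrightarrow> E b a" using simple_graph_sym[OF sg] .
  have irr: "\<And>v. \<not> E v v" using simple_graph_irrefl[OF sg] .
  fix h l assume walk: "walk S E h l" "h l = h 0"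
  show "even l"
  proof (rule ccontr)
    assume "odd l"
    then obtain g k where g: "hole V E g k" "odd k"
      using odd_hole_if_odd_closed_walk[OF sym irr S walk] by blast
    then obtain d where "\<forall>i<k. E d (g i)"
      using hole_dominated[OF sg K4_free_if_colourable_3[OF col] mno] by blast
    then show False using odd_wheel_not_colourable_3[OF sg col g] by blast
  qed
qed

lemma perfect_if_colourable_3:
  assumes sg: "simple_graph V E" and mno: "max_nbhd_ordering V E vs" and col: "colourable E V 3"
  shows "perfect V E"
  unfolding perfect_def
proof (intro allI impI)
  fix S assume S: "S \<subseteq> V"
  have fin: "finite S" using simple_graph_finite[OF sg] S by (rule finite_subset[rotated])
  have sym: "\<And>a b. E a b \<Longrightarrow> E b a" and irr: "\<And>v. \<not> E v v"
    using simple_graph_sym[OF sg] simple_graph_irrefl[OF sg] by auto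
  have "chromatic_number E S \<le> clique_number E S"
  proof (cases "clique_number E S < 3")
    case True
    then have "colourable E S 2"
      using colourable_2_if_triangle_free[OF sg mno col S]
        triangle_free_if_clique_number_less_3[of S E, OF fin irr sym] by blast
    then show ?thesis
      using colourable_clique_number_if_colourable_2[of E S, OF _ fin sym irr] chromatic_number_le by blast
  next
    case False
    then show ?thesis using chromatic_number_le[OF colourable_mono[OF col order_refl S]] by simp
  qed
  then show "chromatic_number E S = clique_number E S"
    using clique_number_le_chromatic_number[of S E, OF fin irr] by simp
qed

lemma colourable_3_if_perfect_K4_free:
  assumes sg: "simple_graph V E" and "perfect V E" "K4_free V E"
  shows "colourable E V 3"
proof -
  have fin: "finite V" and irr: "\<And>v. \<not> E v v"
    using simple_graph_finite[OF sg] simple_graph_irrefl[OF sg] by auto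
  obtain C where C: "C \<subseteq> V" "is_clique E C" "card C = clique_number E V"
    using clique_number_attained[OF fin] .
  have "chromatic_number E V = card C" using assms(2) C(3) unfolding perfect_def by simp
  also have "\<dots> \<le> 3" using K4_free_clique_card_le[OF assms(3) C(1,2)] .
  finally show ?thesis using colourable_mono[OF colourable_chromatic_number[of V E, OF fin irr]] by blast
qed

theorem theorem2:
  fixes V :: "'a set" and E :: "'a \<Rightarrow> 'a \<Rightarrow> bool"
  assumes "simple_graph V E" and "connected_graph V E" and "dually_chordal V E"
  shows "colourable E V 3 \<longleftrightarrow> perfect V E \<and> K4_free V E"
proof -
  obtain vs where "max_nbhd_ordering V E vs"
    using assms(3) unfolding dually_chordal_def by blast
  then show ?thesis
    using perfect_if_colourable_3[OF assms(1)] K4_free_if_colourable_3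
      colourable_3_if_perfect_K4_free[OF assms(1)] by blast
qed

end
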